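(* Let $\epsilon>0$, $\eta:=\mathrm{i}\epsilon$ and $p:=\frac12-\frac1\eta=\frac12+\frac{\mathrm{i}}{\epsilon}$. Let $\mathfrak{H}_a$ be the Hilbert space with orthonormal basis $\{|j,k,l\rangle: j,k,l\in\mathbb{Z}_{\ge0}\}$ and define on it the operators $\mathbf{b}_{\uparrow}^\dagger|j,k,l\rangle=\sqrt{j+1}|j+1,k,l\rangle$, $\mathbf{b}_{\uparrow}|j,k,l\rangle=\sqrt{j}|j-1,k,l\rangle$, $\mathbf{b}_{\downarrow}^\dagger|j,k,l\rangle=\sqrt{k+1}|j,k+1,l\rangle$, $\mathbf{b}_{\downarrow}|j,k,l\rangle=\sqrt{k}|j,k-1,l\rangle$, $\mathbf{s}^{+}|j,k,l\rangle=l|j,k,l-1\rangle$, $\mathbf{s}^{-}|j,k,l\rangle=(2p-l)|j,k,l+1\rangle$, $\mathbf{s}^{z}|j,k,l\rangle=(p-l)|j,k,l\rangle$. Set \begin{align*} &\mathbf{t}^{+}=\mathbf{b}_{\uparrow},\quad \mathbf{t}^{-}=\eta\,\mathbf{b}_{\uparrow}^\dagger,\quad \mathbf{u}^{+}=\eta\,\mathbf{b}_{\downarrow},\quad \mathbf{u}^{-}=\mathbf{b}_{\downarrow}^\dagger,\\ &\mathbf{v}^{+}=\eta(\mathbf{b}_{\uparrow}\mathbf{b}_{\downarrow}+\mathbf{s}^{+}),\quad \mathbf{v}^{-}=\eta(\mathbf{b}_{\uparrow}^\dagger\mathbf{b}_{\downarrow}^\dagger-\mathbf{s}^{-}),\\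 &\mathbf{l}^{\uparrow}=\eta\big(\mathbf{b}_{\uparrow}^\dagger\mathbf{b}_{\uparrow}+\tfrac12-\mathbf{s}^{z}\big),\quad \mathbf{l}^{\downarrow}=\eta\big(\mathbf{b}_{\downarrow}^\dagger\mathbf{b}_{\downarrow}+\tfrac12-\mathbf{s}^{z}\big),\quad \mathbf{l}^{0}=\mathbb{1}, \end{align*} and $|\mathrm{vac}\rangle=|0,0,0\rangle$. Then these operators generate an irreducible representation of the Lie algebra $\mathfrak{g}$ defined by the commutation relations \begin{align*} &[\mathbf{u}^{+},\mathbf{t}^{\pm}]=[\mathbf{u}^{-},\mathbf{t}^{\pm}]=[\mathbf{u}^{\pm},\mathbf{v}^{\pm}]=[\mathbf{t}^{\pm},\mathbf{v}^{\pm}]=0,\quad [\mathbf{l}^{\uparrow},\mathbf{u}^{\pm}]=[\mathbf{l}^{\downarrow},\mathbf{t}^{\pm}]=[\mathbf{l}^{\uparrow},\mathbf{l}^{\downarrow}]=0,\\ &[\mathbf{l}^{\uparrow},\mathbf{t}^{\pm}]=\mp\eta\,\mathbf{t}^{\pm},\quad [\mathbf{l}^{\downarrow},\mathbf{u}^{\pm}]=\mp\eta\,\mathbf{u}^{\pm},\quad [\mathbf{u}^{+},\mathbf{v}^{\mp}]=\pm\mathbf{t}^{\mp},\quad [\mathbf{t}^{\pm},\mathbf{v}^{\mp}]=\pm\eta\,\mathbf{u}^{\mp},\\ &[\mathbf{l}^{\uparrow},\mathbf{v}^{\pm}]=[\mathbf{l}^{\downarrow},\mathbf{v}^{\pm}]=\mp\eta\,\mathbf{v}^{\pm},\quad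 [\mathbf{v}^{+},\mathbf{v}^{-}]=\eta(\mathbf{l}^{\uparrow}+\mathbf{l}^{\downarrow}),\quad [\mathbf{t}^{+},\mathbf{t}^{-}]=[\mathbf{u}^{+},\mathbf{u}^{-}]=\eta\,\mathbf{l}^{0},\\ &[\mathbf{l}^{\uparrow},\mathbf{l}^{0}]=[\mathbf{l}^{\downarrow},\mathbf{l}^{0}]=[\mathbf{u}^{\pm},\mathbf{l}^{0}]=[\mathbf{v}^{\pm},\mathbf{l}^{0}]=[\mathbf{t}^{\pm},\mathbf{l}^{0}]=0, \end{align*} which moreover satisfies the boundary requirements $\mathbf{l}^{\uparrow}|\mathrm{vac}\rangle=\mathbf{l}^{0}|\mathrm{vac}\rangle=\mathbf{l}^{\downarrow}|\mathrm{vac}\rangle=|\mathrm{vac}\rangle$, $\langle\mathrm{vac}|\mathbf{l}^{\uparrow}=\langle\mathrm{vac}|\mathbf{l}^{0}=\langle\mathrm{vac}|\mathbf{l}^{\downarrow}=\langle\mathrm{vac}|$, $\mathbf{t}^{+}|\mathrm{vac}\rangle=\mathbf{u}^{+}|\mathrm{vac}\rangle=\mathbf{v}^{+}|\mathrm{vac}\rangle=0$, $\langle\mathrm{vac}|\mathbf{t}^{-}=\langle\mathrm{vac}|\mathbf{u}^{-}=\langle\mathrm{vac}|\mathbf{v}^{-}=0$.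
   Context: Operators are understood on the dense domain of finite linear combinations of basis vectors; $\mathbf{b}_\uparrow,\mathbf{b}_\downarrow$ are two canonical bosonic modes and $\mathbf{s}^{\pm},\mathbf{s}^z$ act as a lowest/highest-weight (Verma) module of $\mathfrak{sl}_2$ with complex weight $p$. *)

theory Defs
  imports Complex_Main
begin

text \<open>Vectors of the dense domain: finite linear combinations of basis vectors |j,k,l>,
  represented by their coefficient functions with finite support.\<close>

type_synonym vec = "nat \<times> nat \<times> nat \<Rightarrow> complex"
type_synonym op = "vec \<Rightarrow> vec"

definition fin_vec :: "vec \<Rightarrow> bool" where
  "fin_vec x \<longleftrightarrow> finite {i. x i \<noteq> 0}"

definition basis_vec :: "nat \<Rightarrow> nat \<Rightarrow> nat \<Rightarrow> vec" where
  "basis_vec j k l = (\<lambda>i. if i = (j, k, l) then 1 else 0)"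

definition vac :: vec where "vac = basis_vec 0 0 0"

text \<open>Pairing with the bra <vac|: the coefficient of |0,0,0>.\<close>
definition vac_bra :: "vec \<Rightarrow> complex" where "vac_bra x = x (0, 0, 0)"

definition vsmul :: "complex \<Rightarrow> vec \<Rightarrow> vec" where
  "vsmul c x = (\<lambda>i. c * x i)"

definition vadd :: "vec \<Rightarrow> vec \<Rightarrow> vec" where "vadd x y = (\<lambda>i. x i + y i)"
definition vsub :: "vec \<Rightarrow> vec \<Rightarrow> vec" where "vsub x y = (\<lambda>i. x i - y i)"
definition oadd :: "op \<Rightarrow> op \<Rightarrow> op" where "oadd A B = (\<lambda>x. vadd (A x) (B x))"
definition osub :: "op \<Rightarrow> op \<Rightarrow> op" where "osub A B = (\<lambda>x. vsub (A x) (B x))"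
definition osmul :: "complex \<Rightarrow> op \<Rightarrow> op" where "osmul c A = (\<lambda>x. vsmul c (A x))"
definition ocomp :: "op \<Rightarrow> op \<Rightarrow> op" where "ocomp A B = (\<lambda>x. A (B x))"
definition oid :: op where "oid = (\<lambda>x. x)"
definition ocomm :: "op \<Rightarrow> op \<Rightarrow> op" where "ocomm A B = osub (ocomp A B) (ocomp B A)"

definition eta :: "real \<Rightarrow> complex" where "eta \<epsilon> = \<i> * complex_of_real \<epsilon>"
definition pw :: "real \<Rightarrow> complex" where "pw \<epsilon> = 1/2 - 1 / eta \<epsilon>"

text \<open>Coefficient formulas equivalent to the actions on basis vectors.\<close>
definition b_up :: op where     \<comment> \<open>b|j> = sqrt j |j-1>\<close>
  "b_up x = (\<lambda>(j, k, l). complex_of_real (sqrt (real (j + 1))) * x (j + 1, k, l))"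
definition b_up_dag :: op where \<comment> \<open>b\<dagger>|j> = sqrt (j+1) |j+1>\<close>
  "b_up_dag x = (\<lambda>(j, k, l). if j = 0 then 0
       else complex_of_real (sqrt (real j)) * x (j - 1, k, l))"
definition b_dn :: op where
  "b_dn x = (\<lambda>(j, k, l). complex_of_real (sqrt (real (k + 1))) * x (j, k + 1, l))"
definition b_dn_dag :: op where
  "b_dn_dag x = (\<lambda>(j, k, l). if k = 0 then 0
       else complex_of_real (sqrt (real k)) * x (j, k - 1, l))"
definition s_plus :: op where   \<comment> \<open>s+|l> = l |l-1>\<close>
  "s_plus x = (\<lambda>(j, k, l). of_nat (l + 1) * x (j, k, l + 1))"
definition s_minus :: "real \<Rightarrow> op" where  \<comment> \<open>s-|l> = (2p - l) |l+1>\<close>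
  "s_minus \<epsilon> x = (\<lambda>(j, k, l). if l = 0 then 0
       else (2 * pw \<epsilon> - of_nat (l - 1)) * x (j, k, l - 1))"
definition s_z :: "real \<Rightarrow> op" where
  "s_z \<epsilon> x = (\<lambda>(j, k, l). (pw \<epsilon> - of_nat l) * x (j, k, l))"

definition t_plus :: "real \<Rightarrow> op" where "t_plus \<epsilon> = b_up"
definition t_minus :: "real \<Rightarrow> op" where "t_minus \<epsilon> = osmul (eta \<epsilon>) b_up_dag"
definition u_plus :: "real \<Rightarrow> op" where "u_plus \<epsilon> = osmul (eta \<epsilon>) b_dn"
definition u_minus :: "real \<Rightarrow> op" where "u_minus \<epsilon> = b_dn_dag"
definition v_plus :: "real \<Rightarrow> op" where
  "v_plus \<epsilon> = osmul (eta \<epsilon>) (oadd (ocomp b_up b_dn) s_plus)"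
definition v_minus :: "real \<Rightarrow> op" where
  "v_minus \<epsilon> = osmul (eta \<epsilon>) (osub (ocomp b_up_dag b_dn_dag) (s_minus \<epsilon>))"
definition l_up :: "real \<Rightarrow> op" where
  "l_up \<epsilon> = osmul (eta \<epsilon>)
      (osub (oadd (ocomp b_up_dag b_up) (osmul (1/2) oid)) (s_z \<epsilon>))"
definition l_dn :: "real \<Rightarrow> op" where
  "l_dn \<epsilon> = osmul (eta \<epsilon>)
      (osub (oadd (ocomp b_dn_dag b_dn) (osmul (1/2) oid)) (s_z \<epsilon>))"
definition l_zero :: "real \<Rightarrow> op" where "l_zero \<epsilon> = oid"

definition generators :: "real \<Rightarrow> op set" where
  "generators \<epsilon> = {t_plus \<epsilon>, t_minus \<epsilon>, u_plus \<epsilon>, u_minus \<epsilon>, v_plus \<epsilon>, v_minus \<epsilon>,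
                    l_up \<epsilon>, l_dn \<epsilon>, l_zero \<epsilon>}"

definition op_eq :: "op \<Rightarrow> op \<Rightarrow> bool" (infix "\<doteq>" 50) where
  "A \<doteq> B \<longleftrightarrow> (\<forall>x. fin_vec x \<longrightarrow> A x = B x)"

definition zero_op :: op where "zero_op = (\<lambda>x. (\<lambda>_. 0))"

definition invariant_subspace :: "op set \<Rightarrow> vec set \<Rightarrow> bool" where
  "invariant_subspace S W \<longleftrightarrow>
     W \<subseteq> {x. fin_vec x} \<and> (\<lambda>_. 0) \<in> W \<and>
     (\<forall>x\<in>W. \<forall>y\<in>W. vadd x y \<in> W) \<and> (\<forall>c. \<forall>x\<in>W. vsmul c x \<in> W) \<and>
     (\<forall>A\<in>S. \<forall>x\<in>W. A x \<in> W)"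

definition irreducible_on_domain :: "op set \<Rightarrow> bool" where
  "irreducible_on_domain S \<longleftrightarrow>
     (\<forall>A\<in>S. \<forall>x. fin_vec x \<longrightarrow> fin_vec (A x)) \<and>
     (\<forall>W. invariant_subspace S W \<longrightarrow> W = {\<lambda>_. 0} \<or> W = {x. fin_vec x})"

end

theory Submission
  imports Defs
begin

text \<open>All nine operators act on coefficients as weighted shifts, so every commutation
  relation and boundary requirement is an identity between explicit coefficient formulas.
  For irreducibility let \<open>W\<close> be a nonzero invariant subspace. The lowering operators
  \<open>t\<^sup>+\<close>, \<open>u\<^sup>+\<close> and (on vectors supported in \<open>j = k = 0\<close>) \<open>v\<^sup>+\<close> shift \<open>j\<close>, \<open>k\<close> and \<open>l\<close>
  down by one with nonzero weights \<open>\<surd>n\<close>, \<open>\<eta>\<surd>n\<close> and \<open>\<eta>n\<close>; applying them as long as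
  possible to a nonzero vector of \<open>W\<close> leaves a nonzero multiple of \<open>|vac\<rangle>\<close>. Conversely
  \<open>t\<^sup>-\<close> and \<open>u\<^sup>-\<close> raise \<open>j\<close> and \<open>k\<close>, while \<open>t\<^sup>-u\<^sup>- - v\<^sup>-\<close> maps \<open>|0,0,l\<rangle>\<close> to
  \<open>\<eta>(2p - l)|0,0,l+1\<rangle>\<close>, and \<open>2p - l \<noteq> 0\<close> because \<open>Im(2p) = 2/\<epsilon>\<close>. Hence \<open>W\<close> contains
  every basis vector and so the whole dense domain.\<close>

definition sqrtc :: "nat \<Rightarrow> complex" where
  "sqrtc n = complex_of_real (sqrt (real n))"

lemma sqrtc_0 [simp]: "sqrtc 0 = 0"
  by (simp add: sqrtc_def)

lemma sqrtc_Suc_nonzero [simp]: "sqrtc (Suc n) \<noteq> 0"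
  by (simp add: sqrtc_def)

lemma sqrtc_mult_self [simp]: "sqrtc n * sqrtc n = of_nat n"
  by (simp add: sqrtc_def flip: of_real_mult)

lemma sqrtc_mult_self_left [simp]: "sqrtc n * (sqrtc n * z) = of_nat n * z"
  by (simp flip: mult.assoc)

lemma eta_nonzero: "\<epsilon> \<noteq> 0 \<Longrightarrow> eta \<epsilon> \<noteq> 0"
  by (simp add: eta_def)

lemma eta_mult_half_minus_pw: "\<epsilon> \<noteq> 0 \<Longrightarrow> eta \<epsilon> * (1/2 - pw \<epsilon>) = 1"
  by (simp add: pw_def eta_nonzero)

lemma two_pw_minus_nat_nonzero:
  assumes "\<epsilon> \<noteq> 0"
  shows "2 * pw \<epsilon> - of_nat n \<noteq> 0"
proof
  assume "2 * pw \<epsilon> - of_nat n = 0"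
  moreover have "Im (2 * pw \<epsilon> - of_nat n) = 2 / \<epsilon>"
    using assms by (simp add: pw_def eta_def Im_divide power2_eq_square)
  ultimately show False
    using assms by simp
qed

subsection \<open>Coefficient formulas\<close>

lemma b_up_number: "b_up_dag (b_up x) (j, k, l) = of_nat j * x (j, k, l)"
  by (cases j) (simp_all add: b_up_def b_up_dag_def flip: of_real_mult mult.assoc)

lemma b_dn_number: "b_dn_dag (b_dn x) (j, k, l) = of_nat k * x (j, k, l)"
  by (cases k) (simp_all add: b_dn_def b_dn_dag_def flip: of_real_mult mult.assoc)

lemmas vec_op_defs = ocomm_def osub_def ocomp_def oadd_def osmul_def oid_def zero_op_def
  vadd_def vsub_def vsmul_def

text \<open>Since \<open>sqrtc 0 = 0\<close>, the truncated subtractions \<open>j - 1\<close>, \<open>k - 1\<close> are harmless.\<close>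

lemma t_plus_apply: "t_plus \<epsilon> x (j, k, l) = sqrtc (Suc j) * x (Suc j, k, l)"
  by (simp add: t_plus_def b_up_def sqrtc_def)

lemma t_minus_apply: "t_minus \<epsilon> x (j, k, l) = eta \<epsilon> * sqrtc j * x (j - 1, k, l)"
  by (simp add: t_minus_def b_up_dag_def sqrtc_def vec_op_defs)

lemma u_plus_apply: "u_plus \<epsilon> x (j, k, l) = eta \<epsilon> * sqrtc (Suc k) * x (j, Suc k, l)"
  by (simp add: u_plus_def b_dn_def sqrtc_def vec_op_defs)

lemma u_minus_apply: "u_minus \<epsilon> x (j, k, l) = sqrtc k * x (j, k - 1, l)"
  by (simp add: u_minus_def b_dn_dag_def sqrtc_def)

lemma v_plus_apply:
  "v_plus \<epsilon> x (j, k, l) = eta \<epsilon> *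
     (sqrtc (Suc j) * sqrtc (Suc k) * x (Suc j, Suc k, l) + of_nat (Suc l) * x (j, k, Suc l))"
  by (simp add: v_plus_def b_up_def b_dn_def s_plus_def sqrtc_def vec_op_defs)

lemma v_minus_apply:
  "v_minus \<epsilon> x (j, k, l) = eta \<epsilon> *
     (sqrtc j * sqrtc k * x (j - 1, k - 1, l)
      - (if l = 0 then 0 else (2 * pw \<epsilon> - of_nat (l - 1)) * x (j, k, l - 1)))"
  by (simp add: v_minus_def b_up_dag_def b_dn_dag_def s_minus_def sqrtc_def vec_op_defs)

lemma l_up_apply:
  "l_up \<epsilon> x (j, k, l) = eta \<epsilon> * (of_nat j + 1/2 - pw \<epsilon> + of_nat l) * x (j, k, l)"
  by (simp add: l_up_def b_up_number s_z_def vec_op_defs algebra_simps)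

lemma l_dn_apply:
  "l_dn \<epsilon> x (j, k, l) = eta \<epsilon> * (of_nat k + 1/2 - pw \<epsilon> + of_nat l) * x (j, k, l)"
  by (simp add: l_dn_def b_dn_number s_z_def vec_op_defs algebra_simps)

lemma l_zero_apply: "l_zero \<epsilon> x = x"
  by (simp add: l_zero_def oid_def)

lemmas generator_apply = t_plus_apply t_minus_apply u_plus_apply u_minus_apply
  v_plus_apply v_minus_apply l_up_apply l_dn_apply l_zero_apply

subsection \<open>Commutation relations\<close>

lemma ocomm_oid: "ocomm A oid \<doteq> zero_op"
  by (simp add: op_eq_def vec_op_defs)

lemma commuting_generators:
  "ocomm (u_plus \<epsilon>) (t_plus \<epsilon>) \<doteq> zero_op" "ocomm (u_plus \<epsilon>) (t_minus \<epsilon>) \<doteq> zero_op"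
  "ocomm (u_minus \<epsilon>) (t_plus \<epsilon>) \<doteq> zero_op" "ocomm (u_minus \<epsilon>) (t_minus \<epsilon>) \<doteq> zero_op"
  "ocomm (u_plus \<epsilon>) (v_plus \<epsilon>) \<doteq> zero_op" "ocomm (u_minus \<epsilon>) (v_minus \<epsilon>) \<doteq> zero_op"
  "ocomm (t_plus \<epsilon>) (v_plus \<epsilon>) \<doteq> zero_op" "ocomm (t_minus \<epsilon>) (v_minus \<epsilon>) \<doteq> zero_op"
  "ocomm (l_up \<epsilon>) (u_plus \<epsilon>) \<doteq> zero_op" "ocomm (l_up \<epsilon>) (u_minus \<epsilon>) \<doteq> zero_op"
  "ocomm (l_dn \<epsilon>) (t_plus \<epsilon>) \<doteq> zero_op" "ocomm (l_dn \<epsilon>) (t_minus \<epsilon>) \<doteq> zero_op"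
  "ocomm (l_up \<epsilon>) (l_dn \<epsilon>) \<doteq> zero_op"
  by (simp_all add: op_eq_def fun_eq_iff vec_op_defs generator_apply algebra_simps
      split: nat_diff_split)

lemma weight_relations:
  "ocomm (l_up \<epsilon>) (t_plus \<epsilon>) \<doteq> osmul (- eta \<epsilon>) (t_plus \<epsilon>)"
  "ocomm (l_up \<epsilon>) (t_minus \<epsilon>) \<doteq> osmul (eta \<epsilon>) (t_minus \<epsilon>)"
  "ocomm (l_dn \<epsilon>) (u_plus \<epsilon>) \<doteq> osmul (- eta \<epsilon>) (u_plus \<epsilon>)"
  "ocomm (l_dn \<epsilon>) (u_minus \<epsilon>) \<doteq> osmul (eta \<epsilon>) (u_minus \<epsilon>)"
  "ocomm (l_up \<epsilon>) (v_plus \<epsilon>) \<doteq> osmul (- eta \<epsilon>) (v_plus \<epsilon>)"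
  "ocomm (l_up \<epsilon>) (v_minus \<epsilon>) \<doteq> osmul (eta \<epsilon>) (v_minus \<epsilon>)"
  "ocomm (l_dn \<epsilon>) (v_plus \<epsilon>) \<doteq> osmul (- eta \<epsilon>) (v_plus \<epsilon>)"
  "ocomm (l_dn \<epsilon>) (v_minus \<epsilon>) \<doteq> osmul (eta \<epsilon>) (v_minus \<epsilon>)"
  by (simp_all add: op_eq_def fun_eq_iff vec_op_defs generator_apply field_simps
      split: nat_diff_split)

lemma mixing_relations:
  "ocomm (u_plus \<epsilon>) (v_minus \<epsilon>) \<doteq> osmul (eta \<epsilon>) (t_minus \<epsilon>)"
  "ocomm (u_minus \<epsilon>) (v_plus \<epsilon>) \<doteq> osmul (- eta \<epsilon>) (t_plus \<epsilon>)"
  "ocomm (t_plus \<epsilon>) (v_minus \<epsilon>) \<doteq> osmul (eta \<epsilon>) (u_minus \<epsilon>)"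
  "ocomm (t_minus \<epsilon>) (v_plus \<epsilon>) \<doteq> osmul (- eta \<epsilon>) (u_plus \<epsilon>)"
  by (simp_all add: op_eq_def fun_eq_iff vec_op_defs generator_apply algebra_simps
      split: nat_diff_split)

lemma raising_lowering_relations:
  "ocomm (t_plus \<epsilon>) (t_minus \<epsilon>) \<doteq> osmul (eta \<epsilon>) (l_zero \<epsilon>)"
  "ocomm (u_plus \<epsilon>) (u_minus \<epsilon>) \<doteq> osmul (eta \<epsilon>) (l_zero \<epsilon>)"
  "ocomm (v_plus \<epsilon>) (v_minus \<epsilon>) \<doteq> osmul (eta \<epsilon>) (oadd (l_up \<epsilon>) (l_dn \<epsilon>))"
  by (simp_all add: op_eq_def fun_eq_iff vec_op_defs generator_apply field_simps
      split: nat_diff_split)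

lemma l_up_vac: "\<epsilon> \<noteq> 0 \<Longrightarrow> l_up \<epsilon> vac = vac"
  by (auto simp: fun_eq_iff l_up_apply vac_def basis_vec_def eta_mult_half_minus_pw)

lemma l_dn_vac: "\<epsilon> \<noteq> 0 \<Longrightarrow> l_dn \<epsilon> vac = vac"
  by (auto simp: fun_eq_iff l_dn_apply vac_def basis_vec_def eta_mult_half_minus_pw)

lemma vac_bra_l_up: "\<epsilon> \<noteq> 0 \<Longrightarrow> vac_bra (l_up \<epsilon> x) = vac_bra x"
  by (simp add: vac_bra_def l_up_apply eta_mult_half_minus_pw)

lemma vac_bra_l_dn: "\<epsilon> \<noteq> 0 \<Longrightarrow> vac_bra (l_dn \<epsilon> x) = vac_bra x"
  by (simp add: vac_bra_def l_dn_apply eta_mult_half_minus_pw)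

lemma lowering_vac:
  "t_plus \<epsilon> vac = (\<lambda>_. 0)" "u_plus \<epsilon> vac = (\<lambda>_. 0)" "v_plus \<epsilon> vac = (\<lambda>_. 0)"
  by (auto simp: fun_eq_iff generator_apply vac_def basis_vec_def)

lemma vac_bra_raising:
  "vac_bra (t_minus \<epsilon> x) = 0" "vac_bra (u_minus \<epsilon> x) = 0" "vac_bra (v_minus \<epsilon> x) = 0"
  by (simp_all add: vac_bra_def generator_apply)

subsection \<open>Finiteness of supports\<close>

lemma fin_vec_bounded:
  assumes "fin_vec x"
  obtains n where "\<And>i. x i \<noteq> 0 \<Longrightarrow> (f i :: nat) \<le> n"
proof -
  have "finite (f ` {i. x i \<noteq> 0})"
    using assms unfolding fin_vec_def by simp
  then obtain n where "\<forall>m \<in> f ` {i. x i \<noteq> 0}. m \<le> n"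
    using finite_nat_set_iff_bounded_le by blast
  then show ?thesis
    using that by blast
qed

lemma fin_vec_if_bounded:
  assumes "\<And>j k l. x (j, k, l) \<noteq> 0 \<Longrightarrow> j + k + l \<le> n"
  shows "fin_vec x"
proof -
  have "{i. x i \<noteq> 0} \<subseteq> {..n} \<times> {..n} \<times> {..n}"
    using assms by fastforce
  then have "finite {i. x i \<noteq> 0}"
    by (rule finite_subset) simp
  then show ?thesis unfolding fin_vec_def .
qed

lemma generator_support:
  assumes "A \<in> generators \<epsilon>" and "A x (j, k, l) \<noteq> 0"
  shows "x (Suc j, k, l) \<noteq> 0 \<or> x (j - 1, k, l) \<noteq> 0 \<or> x (j, Suc k, l) \<noteq> 0
    \<or> x (j, k - 1, l) \<noteq> 0 \<or> x (Suc j, Suc k, l) \<noteq> 0 \<or> x (j, k, Suc l) \<noteq> 0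
    \<or> x (j - 1, k - 1, l) \<noteq> 0 \<or> x (j, k, l - 1) \<noteq> 0 \<or> x (j, k, l) \<noteq> 0"
  using assms by (auto simp: generators_def generator_apply split: if_splits)

lemma fin_vec_generator:
  assumes "A \<in> generators \<epsilon>" and "fin_vec x"
  shows "fin_vec (A x)"
proof -
  obtain n where n: "\<And>j k l. x (j, k, l) \<noteq> 0 \<Longrightarrow> j + k + l \<le> n"
    using fin_vec_bounded[OF \<open>fin_vec x\<close>, of "\<lambda>(j, k, l). j + k + l"] by fastforce
  have "j + k + l \<le> n + 2" if "A x (j, k, l) \<noteq> 0" for j k l
    using generator_support[OF assms(1) that] by (elim disjE) (drule n, linarith)+
  then show ?thesis
    by (rule fin_vec_if_bounded)
qed

subsection \<open>Invariant subspaces\<close>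

definition supported_in :: "(nat \<times> nat \<times> nat \<Rightarrow> bool) \<Rightarrow> vec \<Rightarrow> bool" where
  "supported_in Q x \<longleftrightarrow> (\<forall>i. x i \<noteq> 0 \<longrightarrow> Q i)"

lemma invariant_subspace_fin_vec: "invariant_subspace S W \<Longrightarrow> x \<in> W \<Longrightarrow> fin_vec x"
  by (auto simp: invariant_subspace_def)

lemma invariant_subspace_vadd:
  "invariant_subspace S W \<Longrightarrow> x \<in> W \<Longrightarrow> y \<in> W \<Longrightarrow> vadd x y \<in> W"
  by (simp add: invariant_subspace_def)

lemma invariant_subspace_vsmul: "invariant_subspace S W \<Longrightarrow> x \<in> W \<Longrightarrow> vsmul c x \<in> W"
  by (simp add: invariant_subspace_def)

lemma invariant_subspace_vsub:
  assumes "invariant_subspace S W" "x \<in> W" "y \<in> W"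
  shows "vsub x y \<in> W"
proof -
  have "vsub x y = vadd x (vsmul (- 1) y)"
    by (simp add: fun_eq_iff vec_op_defs)
  then show ?thesis
    using assms invariant_subspace_vadd invariant_subspace_vsmul by metis
qed

lemma invariant_subspace_apply:
  "invariant_subspace S W \<Longrightarrow> A \<in> S \<Longrightarrow> x \<in> W \<Longrightarrow> A x \<in> W"
  by (simp add: invariant_subspace_def)

lemma weighted_shift_descent:
  assumes W: "invariant_subspace S W" and A: "A \<in> S"
    and shift: "\<And>x i. supported_in Q x \<Longrightarrow> A x i = c i * x (\<sigma> i)"
    and weight_nonzero: "\<And>i. c i \<noteq> 0"
    and Q_shift: "\<And>i. Q (\<sigma> i) \<Longrightarrow> Q i"
    and lowers: "\<And>i. f (\<sigma> i) = Suc (f i)"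
    and onto: "\<And>i. 0 < f i \<Longrightarrow> \<exists>i'. i = \<sigma> i'"
    and x: "x \<in> W" "supported_in Q x" "x \<noteq> (\<lambda>_. 0)"
  shows "\<exists>y\<in>W. y \<noteq> (\<lambda>_. 0) \<and> supported_in (\<lambda>i. Q i \<and> f i = 0) y"
proof -
  obtain n where "\<And>i. x i \<noteq> 0 \<Longrightarrow> f i \<le> n"
    using fin_vec_bounded[OF invariant_subspace_fin_vec[OF W x(1)], of f] by blast
  with x show ?thesis
  proof (induction n arbitrary: x)
    case 0
    then show ?case
      by (auto simp: supported_in_def)
  next
    case (Suc n)
    note Ax = shift[OF Suc.prems(2)]
    show ?case
    proof (cases "\<exists>i. x i \<noteq> 0 \<and> 0 < f i")
      case True
      then obtain i where i: "x i \<noteq> 0" "0 < f i"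
        by blast
      then obtain i' where "i = \<sigma> i'"
        using onto by blast
      have Ax_support: "x (\<sigma> i) \<noteq> 0" if "A x i \<noteq> 0" for i
        using that by (simp add: Ax)
      have "A x \<in> W"
        using W A Suc.prems(1) by (rule invariant_subspace_apply)
      moreover have "supported_in Q (A x)"
        using Ax_support Suc.prems(2) Q_shift unfolding supported_in_def by blast
      moreover have "A x \<noteq> (\<lambda>_. 0)"
        using i \<open>i = \<sigma> i'\<close> weight_nonzero[of i'] by (metis Ax mult_eq_0_iff)
      moreover have "f i \<le> n" if "A x i \<noteq> 0" for i
        using Suc.prems(4)[OF Ax_support[OF that]] lowers[of i] by simp
      ultimately show ?thesis
        by (rule Suc.IH)
    next
      case False
      then have "supported_in (\<lambda>i. Q i \<and> f i = 0) x"
        using Suc.prems(2) unfolding supported_in_def by auto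
      with Suc.prems(1,3) show ?thesis
        by blast
    qed
  qed
qed
lemma generator_mem:
  "t_plus \<epsilon> \<in> generators \<epsilon>" "t_minus \<epsilon> \<in> generators \<epsilon>" "u_plus \<epsilon> \<in> generators \<epsilon>"
  "u_minus \<epsilon> \<in> generators \<epsilon>" "v_plus \<epsilon> \<in> generators \<epsilon>" "v_minus \<epsilon> \<in> generators \<epsilon>"
  by (simp_all add: generators_def)

lemma supported_in_mono: "supported_in P x \<Longrightarrow> (\<And>i. P i \<Longrightarrow> Q i) \<Longrightarrow> supported_in Q x"
  by (simp add: supported_in_def)

lemma t_plus_descent:
  assumes W: "invariant_subspace (generators \<epsilon>) W" and x: "x \<in> W" "x \<noteq> (\<lambda>_. 0)"
  shows "\<exists>y\<in>W. y \<noteq> (\<lambda>_. 0) \<and> supported_in (\<lambda>(j, k, l). j = 0) y"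
proof -
  have "\<exists>y\<in>W. y \<noteq> (\<lambda>_. 0) \<and> supported_in (\<lambda>i. True \<and> (case i of (j, k, l) \<Rightarrow> j) = 0) y"
    by (rule weighted_shift_descent[where S = "generators \<epsilon>" and x = x and A = "t_plus \<epsilon>"
          and c = "\<lambda>(j, k, l). sqrtc (Suc j)" and \<sigma> = "\<lambda>(j, k, l). (Suc j, k, l)"])
      (auto simp: W x generator_mem t_plus_apply supported_in_def gr0_conv_Suc split: prod.splits)
  then show ?thesis
    by (auto elim!: supported_in_mono)
qed

lemma u_plus_descent:
  assumes W: "invariant_subspace (generators \<epsilon>) W" and "\<epsilon> \<noteq> 0"
    and x: "x \<in> W" "x \<noteq> (\<lambda>_. 0)" "supported_in (\<lambda>(j, k, l). j = 0) x"
  shows "\<exists>y\<in>W. y \<noteq> (\<lambda>_. 0) \<and> supported_in (\<lambda>(j, k, l). j = 0 \<and> k = 0) y"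
proof -
  have "\<exists>y\<in>W. y \<noteq> (\<lambda>_. 0) \<and>
      supported_in (\<lambda>i. (case i of (j, k, l) \<Rightarrow> j = 0) \<and> (case i of (j, k, l) \<Rightarrow> k) = 0) y"
    by (rule weighted_shift_descent[where S = "generators \<epsilon>" and x = x and A = "u_plus \<epsilon>"
          and c = "\<lambda>(j, k, l). eta \<epsilon> * sqrtc (Suc k)" and \<sigma> = "\<lambda>(j, k, l). (j, Suc k, l)"])
      (use x in \<open>auto simp: W generator_mem u_plus_apply supported_in_def gr0_conv_Suc
          eta_nonzero \<open>\<epsilon> \<noteq> 0\<close> split: prod.splits\<close>)
  then show ?thesis
    by (auto elim!: supported_in_mono)
qed

lemma v_plus_descent:
  assumes W: "invariant_subspace (generators \<epsilon>) W" and "\<epsilon> \<noteq> 0"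
    and x: "x \<in> W" "x \<noteq> (\<lambda>_. 0)" "supported_in (\<lambda>(j, k, l). j = 0 \<and> k = 0) x"
  shows "\<exists>y\<in>W. y \<noteq> (\<lambda>_. 0) \<and> supported_in (\<lambda>i. i = (0, 0, 0)) y"
proof -
  have "\<exists>y\<in>W. y \<noteq> (\<lambda>_. 0) \<and>
      supported_in (\<lambda>i. (case i of (j, k, l) \<Rightarrow> j = 0 \<and> k = 0) \<and> (case i of (j, k, l) \<Rightarrow> l) = 0) y"
    by (rule weighted_shift_descent[where S = "generators \<epsilon>" and x = x and A = "v_plus \<epsilon>"
          and c = "\<lambda>(j, k, l). eta \<epsilon> * of_nat (Suc l)" and \<sigma> = "\<lambda>(j, k, l). (j, k, Suc l)"])
      (use x in \<open>auto simp: W generator_mem v_plus_apply supported_in_def gr0_conv_Suc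
          eta_nonzero \<open>\<epsilon> \<noteq> 0\<close> simp del: of_nat_Suc split: prod.splits\<close>)
  then show ?thesis
    by (auto elim!: supported_in_mono)
qed

lemma vac_mem_invariant_subspace:
  assumes W: "invariant_subspace (generators \<epsilon>) W" and "\<epsilon> \<noteq> 0"
    and x: "x \<in> W" "x \<noteq> (\<lambda>_. 0)"
  shows "vac \<in> W"
proof -
  obtain y1 where "y1 \<in> W" "y1 \<noteq> (\<lambda>_. 0)" "supported_in (\<lambda>(j, k, l). j = 0) y1"
    using t_plus_descent[OF W x] by blast
  then obtain y2 where "y2 \<in> W" "y2 \<noteq> (\<lambda>_. 0)" "supported_in (\<lambda>(j, k, l). j = 0 \<and> k = 0) y2"
    using u_plus_descent[OF W \<open>\<epsilon> \<noteq> 0\<close>] by blast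
  then obtain y where y: "y \<in> W" "y \<noteq> (\<lambda>_. 0)" and "supported_in (\<lambda>i. i = (0, 0, 0)) y"
    using v_plus_descent[OF W \<open>\<epsilon> \<noteq> 0\<close>] by blast
  then have "y = vsmul (y (0, 0, 0)) vac"
    by (auto simp: fun_eq_iff supported_in_def vsmul_def vac_def basis_vec_def)
  then obtain c where c: "y = vsmul c vac"
    by blast
  with y(2) have "c \<noteq> 0"
    by (auto simp: vsmul_def)
  then have "vac = vsmul (1 / c) y"
    by (simp add: c vsmul_def)
  then show ?thesis
    using invariant_subspace_vsmul[OF W y(1), of "1 / c"] by (simp only:)
qed

lemma t_minus_basis_vec:
  "t_minus \<epsilon> (basis_vec j k l) = vsmul (eta \<epsilon> * sqrtc (Suc j)) (basis_vec (Suc j) k l)"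
  by (auto simp: fun_eq_iff t_minus_apply basis_vec_def vsmul_def split: nat_diff_split)

lemma u_minus_basis_vec:
  "u_minus \<epsilon> (basis_vec j k l) = vsmul (sqrtc (Suc k)) (basis_vec j (Suc k) l)"
  by (auto simp: fun_eq_iff u_minus_apply basis_vec_def vsmul_def split: nat_diff_split)

text \<open>The vector \<open>|1,1,l\<rangle>\<close> produced by \<open>v\<^sup>-\<close> is cancelled by \<open>t\<^sup>-u\<^sup>-\<close>.\<close>

lemma raise_l_basis_vec:
  "vsub (t_minus \<epsilon> (u_minus \<epsilon> (basis_vec 0 0 l))) (v_minus \<epsilon> (basis_vec 0 0 l))
     = vsmul (eta \<epsilon> * (2 * pw \<epsilon> - of_nat l)) (basis_vec 0 0 (Suc l))"
  by (auto simp: fun_eq_iff generator_apply basis_vec_def vsmul_def vsub_def algebra_simps split: nat_diff_split)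

lemma basis_vec_mem_invariant_subspace:
  assumes W: "invariant_subspace (generators \<epsilon>) W" and "\<epsilon> \<noteq> 0" and "vac \<in> W"
  shows "basis_vec j k l \<in> W"
proof -
  have rescale: "basis_vec j k l \<in> W" if "vsmul c (basis_vec j k l) \<in> W" "c \<noteq> 0" for c j k l
    using invariant_subspace_vsmul[OF W that(1), of "1 / c"] that(2)
    by (simp add: vsmul_def)
  have "basis_vec 0 0 l \<in> W" for l
  proof (induction l)
    case 0
    show ?case
      using \<open>vac \<in> W\<close> by (simp add: vac_def)
  next
    case (Suc l)
    have "vsub (t_minus \<epsilon> (u_minus \<epsilon> (basis_vec 0 0 l))) (v_minus \<epsilon> (basis_vec 0 0 l)) \<in> W"
      using Suc.IH generator_mem invariant_subspace_apply[OF W] invariant_subspace_vsub[OF W]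
      by metis
    then show ?case
      unfolding raise_l_basis_vec
      by (rule rescale) (use eta_nonzero two_pw_minus_nat_nonzero \<open>\<epsilon> \<noteq> 0\<close> in simp)
  qed
  then have "basis_vec j 0 l \<in> W" for j l
  proof (induction j)
    case (Suc j)
    have "t_minus \<epsilon> (basis_vec j 0 l) \<in> W"
      using invariant_subspace_apply[OF W generator_mem(2) Suc.IH[OF Suc.prems]] .
    then show ?case
      unfolding t_minus_basis_vec by (rule rescale) (use eta_nonzero \<open>\<epsilon> \<noteq> 0\<close> in simp)
  qed
  then show ?thesis
  proof (induction k)
    case (Suc k)
    have "u_minus \<epsilon> (basis_vec j k l) \<in> W"
      using invariant_subspace_apply[OF W generator_mem(4) Suc.IH[OF Suc.prems]] .
    then show ?case
      unfolding u_minus_basis_vec by (rule rescale) simp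
  qed
qed

lemma fin_vec_mem_span_basis:
  assumes W: "invariant_subspace S W" and basis: "\<And>j k l. basis_vec j k l \<in> W"
    and "fin_vec x"
  shows "x \<in> W"
proof -
  have "x \<in> W" if "finite B" "{i. x i \<noteq> 0} \<subseteq> B" for B x
    using that
  proof (induction B arbitrary: x rule: finite_induct)
    case empty
    then have "x = (\<lambda>_. 0)"
      by auto
    then show ?case
      using W by (simp add: invariant_subspace_def)
  next
    case (insert i B)
    obtain j k l where i: "i = (j, k, l)"
      by (cases i)
    have "x = vadd (x(i := 0)) (vsmul (x i) (basis_vec j k l))"
      by (auto simp: fun_eq_iff vadd_def vsmul_def basis_vec_def i)
    moreover have "x(i := 0) \<in> W"
      using insert by (intro insert.IH) auto
    ultimately show ?case
      using W basis invariant_subspace_vadd invariant_subspace_vsmul by metis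
  qed
  then show ?thesis
    using \<open>fin_vec x\<close> by (simp add: fin_vec_def)
qed

theorem irreducible_generators:
  assumes "\<epsilon> \<noteq> 0"
  shows "irreducible_on_domain (generators \<epsilon>)"
  unfolding irreducible_on_domain_def
proof (intro conjI ballI allI impI)
  show "fin_vec (A x)" if "A \<in> generators \<epsilon>" "fin_vec x" for A x
    using that by (rule fin_vec_generator)
  fix W
  assume W: "invariant_subspace (generators \<epsilon>) W"
  show "W = {\<lambda>_. 0} \<or> W = {x. fin_vec x}"
  proof (cases "\<exists>x\<in>W. x \<noteq> (\<lambda>_. 0)")
    case True
    then have "vac \<in> W"
      using vac_mem_invariant_subspace[OF W assms] by blast
    then have "x \<in> W" if "fin_vec x" for x
      using fin_vec_mem_span_basis[OF W basis_vec_mem_invariant_subspace[OF W assms] that] by blast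
    then show ?thesis
      using W by (auto simp: invariant_subspace_def)
  next
    case False
    then show ?thesis
      using W by (auto simp: invariant_subspace_def)
  qed
qed
theorem mainTheorem2:
  fixes \<epsilon> :: real
  assumes "\<epsilon> > 0"
  defines "\<eta> \<equiv> eta \<epsilon>"
      and "tp \<equiv> t_plus \<epsilon>" and "tm \<equiv> t_minus \<epsilon>"
      and "up \<equiv> u_plus \<epsilon>" and "um \<equiv> u_minus \<epsilon>"
      and "vp \<equiv> v_plus \<epsilon>" and "vm \<equiv> v_minus \<epsilon>"
      and "lu \<equiv> l_up \<epsilon>" and "ld \<equiv> l_dn \<epsilon>" and "l0 \<equiv> l_zero \<epsilon>"
  shows
    \<comment> \<open>irreducibility of the representation generated by the operators\<close>
    "irreducible_on_domain (generators \<epsilon>)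
   \<comment> \<open>commutation relations of g\<close>
   \<and> ocomm up tp \<doteq> zero_op \<and> ocomm up tm \<doteq> zero_op
   \<and> ocomm um tp \<doteq> zero_op \<and> ocomm um tm \<doteq> zero_op
   \<and> ocomm up vp \<doteq> zero_op \<and> ocomm um vm \<doteq> zero_op
   \<and> ocomm tp vp \<doteq> zero_op \<and> ocomm tm vm \<doteq> zero_op
   \<and> ocomm lu up \<doteq> zero_op \<and> ocomm lu um \<doteq> zero_op
   \<and> ocomm ld tp \<doteq> zero_op \<and> ocomm ld tm \<doteq> zero_op
   \<and> ocomm lu ld \<doteq> zero_op
   \<and> ocomm lu tp \<doteq> osmul (- \<eta>) tp \<and> ocomm lu tm \<doteq> osmul \<eta> tm
   \<and> ocomm ld up \<doteq> osmul (- \<eta>) up \<and> ocomm ld um \<doteq> osmul \<eta> um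
   \<and> ocomm up vm \<doteq> osmul \<eta> tm \<and> ocomm um vp \<doteq> osmul (- \<eta>) tp
   \<and> ocomm tp vm \<doteq> osmul \<eta> um \<and> ocomm tm vp \<doteq> osmul (- \<eta>) up
   \<and> ocomm lu vp \<doteq> osmul (- \<eta>) vp \<and> ocomm lu vm \<doteq> osmul \<eta> vm
   \<and> ocomm ld vp \<doteq> osmul (- \<eta>) vp \<and> ocomm ld vm \<doteq> osmul \<eta> vm
   \<and> ocomm vp vm \<doteq> osmul \<eta> (oadd lu ld)
   \<and> ocomm tp tm \<doteq> osmul \<eta> l0 \<and> ocomm up um \<doteq> osmul \<eta> l0
   \<and> ocomm lu l0 \<doteq> zero_op \<and> ocomm ld l0 \<doteq> zero_op
   \<and> ocomm up l0 \<doteq> zero_op \<and> ocomm um l0 \<doteq> zero_op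
   \<and> ocomm vp l0 \<doteq> zero_op \<and> ocomm vm l0 \<doteq> zero_op
   \<and> ocomm tp l0 \<doteq> zero_op \<and> ocomm tm l0 \<doteq> zero_op
   \<comment> \<open>boundary requirements\<close>
   \<and> lu vac = vac \<and> l0 vac = vac \<and> ld vac = vac
   \<and> (\<forall>x. fin_vec x \<longrightarrow> vac_bra (lu x) = vac_bra x \<and> vac_bra (l0 x) = vac_bra x
                          \<and> vac_bra (ld x) = vac_bra x)
   \<and> tp vac = (\<lambda>_. 0) \<and> up vac = (\<lambda>_. 0) \<and> vp vac = (\<lambda>_. 0)
   \<and> (\<forall>x. fin_vec x \<longrightarrow> vac_bra (tm x) = 0 \<and> vac_bra (um x) = 0 \<and> vac_bra (vm x) = 0)"
proof -
  have \<epsilon>: "\<epsilon> \<noteq> 0"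
    using assms by simp
  show ?thesis
    unfolding \<eta>_def tp_def tm_def up_def um_def vp_def vm_def lu_def ld_def l0_def
    using irreducible_generators[OF \<epsilon>] commuting_generators weight_relations mixing_relations
      raising_lowering_relations ocomm_oid lowering_vac vac_bra_raising
      l_up_vac[OF \<epsilon>] l_dn_vac[OF \<epsilon>] vac_bra_l_up[OF \<epsilon>] vac_bra_l_dn[OF \<epsilon>]
    by (simp add: l_zero_def oid_def)
qed

end
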